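(* Let $(a_m)_{m\ge0}$ be defined by $a_0=a_1=1$ and $a_{m+1}=-1+\sum_{p=0}^{m}a_pa_{m-p}$ for $m\ge1$ (OEIS A176677). For any $x,y\in\{0,1\}$, the tree pattern $(P,e)=(12435,10xy)$ satisfies $|\mathcal{T}_n(P,e)|=a_{n+1}$ for all $n\ge0$; i.e., the class $\mathcal{T}_n(12435,10\text{-}\text{-})$ is counted by OEIS A176677.
   Context: $\mathcal{T}_n$ is the set of binary trees on $n$ vertices labeled $1,\dots,n$ by the search tree property; $\mathcal{T}_0=\{\varepsilon\}$. $c_L,c_R,p$: left child, right child, parent. A tree pattern is $(P,e)$, $P\in\mathcal{T}_k$, $e\colon[k]\setminus\{\text{root}\}\to\{0,1\}$ ($e(i)=1$: edge to parent contiguous; $0$: non-contiguous). $T\in\mathcal{T}_n$ contains $(P,e)$ if there is an injection $f\colon[k]\to[n]$ such that for every non-root $i$ of $P$: if $e(i)=1$, $f(i)$ is the left (resp. right) child of $f(p(i))$ when $i$ is the left (resp. right) child of $p(i)$; if $e(i)=0$, $f(i)$ lies in the left (resp. right) subtree of $f(p(i))$. $\mathcal{T}_n(P,e)$ is the set of avoiders. Compact notation: $(\tau_1\cdots\tau_k,\,x_2\cdots x_k)$ denotes the pattern whose preorder vertex sequence (root, then left subtree recursively, then right subtree recursively) is $\tau_1,\dots,\tau_k$ and with $e(\tau_j)=x_j$; thus $(12435,10xy)$ is the tree with root 1, right child 2 of 1, right child 4 of 2, left child 3 and right child 5 of 4, with $e(2)=1$, $e(4)=0$, $e(3)=x$,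 $e(5)=y$. *)

theory Defs
  imports Main "HOL-Library.Tree"
begin

definition BT :: "nat \<Rightarrow> nat tree set" where
  "BT n = {T. inorder T = [1..<n+1]}"

definition lchild :: "nat tree \<Rightarrow> nat \<Rightarrow> nat \<Rightarrow> bool" where
  "lchild T v w \<longleftrightarrow> (\<exists>l r. Node l v r \<in> subtrees T \<and> l \<noteq> Leaf \<and> value l = w)"
definition rchild :: "nat tree \<Rightarrow> nat \<Rightarrow> nat \<Rightarrow> bool" where
  "rchild T v w \<longleftrightarrow> (\<exists>l r. Node l v r \<in> subtrees T \<and> r \<noteq> Leaf \<and> value r = w)"

definition in_lsub :: "nat tree \<Rightarrow> nat \<Rightarrow> nat \<Rightarrow> bool" where
  "in_lsub T v w \<longleftrightarrow> (\<exists>l r. Node l v r \<in> subtrees T \<and> w \<in> set_tree l)"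
definition in_rsub :: "nat tree \<Rightarrow> nat \<Rightarrow> nat \<Rightarrow> bool" where
  "in_rsub T v w \<longleftrightarrow> (\<exists>l r. Node l v r \<in> subtrees T \<and> w \<in> set_tree r)"

text \<open>T contains the tree pattern (P,e); e i = True means the edge from i to its
  parent is contiguous (value 1), False means non-contiguous (value 0).\<close>
definition contains :: "nat tree \<Rightarrow> nat tree \<Rightarrow> (nat \<Rightarrow> bool) \<Rightarrow> bool" where
  "contains T P e \<longleftrightarrow> (\<exists>f. inj_on f (set_tree P) \<and> f ` set_tree P \<subseteq> set_tree T \<and>
     (\<forall>v i. lchild P v i \<longrightarrow>
        (if e i then lchild T (f v) (f i) else in_lsub T (f v) (f i))) \<and>
     (\<forall>v i. rchild P v i \<longrightarrow>
        (if e i then rchild T (f v) (f i) else in_rsub T (f v) (f i))))"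

definition avoiders :: "nat \<Rightarrow> nat tree \<Rightarrow> (nat \<Rightarrow> bool) \<Rightarrow> nat tree set" where
  "avoiders n P e = {T \<in> BT n. \<not> contains T P e}"

definition P12435 :: "nat tree" where
  "P12435 = Node Leaf 1 (Node Leaf 2 (Node (Node Leaf 3 Leaf) 4 (Node Leaf 5 Leaf)))"

definition e10xy :: "bool \<Rightarrow> bool \<Rightarrow> nat \<Rightarrow> bool" where
  "e10xy x y i = (if i = 2 then True else if i = 4 then False else if i = 3 then x else y)"

end

theory Submission
  imports Defs "HOL-Computational_Algebra.Formal_Power_Series"
begin

(* The edge 2-4 of the pattern is non-contiguous, and the edges 4-3 and 4-5, contiguous or not,
   only force the image of 4 to have two children. Hence a tree contains (12435,10xy) iff the
   right subtree of some right child is not a path, and the avoiders are the trees in which the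
   right subtree of every right child is a path. Splitting at the root, the generating functions
   A of these trees, E of those among them whose own right subtree is a path, and
   P = (1 - x)/(1 - 2x) of paths satisfy A = 1 + xAE and E = 1 + xAP. Eliminating E and P gives
   (1 - x)(A - (1 + xA)^2) = -x, which is the recurrence of A176677 for 1, A_0, A_1, ... *)

section \<open>Trees whose right children have paths as right subtrees\<close>

fun path_tree :: "'a tree \<Rightarrow> bool" where
  "path_tree Leaf = True"
| "path_tree (Node l _ r) \<longleftrightarrow> (l = Leaf \<or> r = Leaf) \<and> path_tree l \<and> path_tree r"

(* right_paths_rchild t is the condition on a right child t: in addition, the right subtree
   of t itself must be a path. *)
fun right_paths :: "'a tree \<Rightarrow> bool" and right_paths_rchild :: "'a tree \<Rightarrow> bool" where
  "right_paths Leaf = True"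
| "right_paths (Node l _ r) \<longleftrightarrow> right_paths l \<and> right_paths_rchild r"
| "right_paths_rchild Leaf = True"
| "right_paths_rchild (Node l _ r) \<longleftrightarrow> right_paths l \<and> path_tree r"

lemma path_tree_iff_subtrees:
  "path_tree t \<longleftrightarrow> (\<forall>l v r. Node l v r \<in> subtrees t \<longrightarrow> l = Leaf \<or> r = Leaf)"
  by (induction t) (simp_all, blast)

lemma path_tree_imp_right_paths: "path_tree t \<Longrightarrow> right_paths t \<and> right_paths_rchild t"
  by (induction t) auto

lemma right_paths_rchild_iff:
  "right_paths_rchild t \<longleftrightarrow> right_paths t \<and> (case t of Leaf \<Rightarrow> True | Node _ _ r \<Rightarrow> path_tree r)"
  by (cases t) (auto dest: path_tree_imp_right_paths)

lemma right_paths_iff_subtrees: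
  "right_paths t \<longleftrightarrow> (\<forall>l u rl v rr. Node l u (Node rl v rr) \<in> subtrees t \<longrightarrow> path_tree rr)"
proof (induction t)
  case (Node l u r)
  then show ?case by (cases r) (auto simp: right_paths_rchild_iff)
qed simp

lemma subtrees_trans: "s \<in> subtrees t \<Longrightarrow> subtrees s \<subseteq> subtrees t"
  by (induction t) auto

lemma distinct_inorder_subtree: "s \<in> subtrees t \<Longrightarrow> distinct (inorder t) \<Longrightarrow> distinct (inorder s)"
  by (induction t) auto

lemma subtrees_same_root_eq:
  "distinct (inorder t) \<Longrightarrow> Node l1 a r1 \<in> subtrees t \<Longrightarrow> Node l2 a r2 \<in> subtrees t \<Longrightarrow>
    l1 = l2 \<and> r1 = r2"
  by (induction t) (auto dest: in_set_tree_if)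

lemma set_tree_subtrees: "s \<in> subtrees t \<Longrightarrow> set_tree s \<subseteq> set_tree t"
  by (induction t) auto

section \<open>Containment of the pattern\<close>

lemma lchild_imp_in_lsub: "lchild T v w \<Longrightarrow> in_lsub T v w"
  unfolding lchild_def in_lsub_def by (force simp: neq_Leaf_iff)

lemma rchild_imp_in_rsub: "rchild T v w \<Longrightarrow> in_rsub T v w"
  unfolding rchild_def in_rsub_def by (force simp: neq_Leaf_iff)

lemma set_tree_P12435: "set_tree P12435 = {1, 2, 3, 4, 5}"
  by (auto simp: P12435_def)

lemma lchild_P12435_iff: "lchild P12435 v i \<longleftrightarrow> v = 4 \<and> i = 3"
  unfolding lchild_def P12435_def by force

lemma rchild_P12435_iff:
  "rchild P12435 v i \<longleftrightarrow> v = 1 \<and> i = 2 \<or> v = 2 \<and> i = 4 \<or> v = 4 \<and> i = 5"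
  unfolding rchild_def P12435_def by force

lemma not_path_tree_if_pattern_nodes:
  assumes T: "distinct (inorder T)" and "rchild T u v" and "in_rsub T v w"
    and "in_lsub T w p" and "in_rsub T w q"
  shows "\<exists>l rl rr. Node l u (Node rl v rr) \<in> subtrees T \<and> \<not> path_tree rr"
proof -
  obtain l rl rr where uv: "Node l u (Node rl v rr) \<in> subtrees T"
    using \<open>rchild T u v\<close> by (auto simp: rchild_def neq_Leaf_iff)
  then have v: "Node rl v rr \<in> subtrees T" and rr: "subtrees rr \<subseteq> subtrees T"
    using subtrees_trans by fastforce+
  have "w \<in> set_tree rr"
    using \<open>in_rsub T v w\<close> subtrees_same_root_eq[OF T _ v] by (auto simp: in_rsub_def)
  then obtain a b where w_rr: "Node a w b \<in> subtrees rr"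
    using set_treeE by metis
  then have w: "Node a w b \<in> subtrees T"
    using rr by blast
  have "a \<noteq> Leaf" "b \<noteq> Leaf"
    using \<open>in_lsub T w p\<close> \<open>in_rsub T w q\<close> subtrees_same_root_eq[OF T _ w]
    by (fastforce simp: in_lsub_def in_rsub_def)+
  then have "\<not> path_tree rr"
    using w_rr by (auto simp: path_tree_iff_subtrees)
  then show ?thesis
    using uv by blast
qed

lemma contains_P12435_if_not_path_tree:
  assumes T: "distinct (inorder T)" and uv: "Node l u (Node rl v rr) \<in> subtrees T"
    and "\<not> path_tree rr"
  shows "contains T P12435 (e10xy x y)"
proof -
  obtain wl w wr where w_rr: "Node wl w wr \<in> subtrees rr" and "wl \<noteq> Leaf" "wr \<noteq> Leaf"
    using \<open>\<not> path_tree rr\<close> by (auto simp: path_tree_iff_subtrees)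
  then obtain p q where p: "p \<in> set_tree wl" "value wl = p" and q: "q \<in> set_tree wr" "value wr = q"
    by (cases wl; cases wr) auto
  have v: "Node rl v rr \<in> subtrees T" and w: "Node wl w wr \<in> subtrees T"
    using subtrees_trans[OF uv] w_rr by auto
  have "distinct (inorder (Node l u (Node rl v rr)))" "distinct (inorder (Node wl w wr))"
    using distinct_inorder_subtree[OF uv T] distinct_inorder_subtree[OF w T] .
  moreover have "w \<in> set_tree rr" "set_tree wl \<subseteq> set_tree rr" "set_tree wr \<subseteq> set_tree rr"
    using set_tree_subtrees[OF w_rr] by auto
  ultimately have distinct: "distinct [u, v, p, w, q]"
    using p q by auto
  define f where "f i = [u, v, p, w, q] ! (i - 1)" for i :: nat
  have edges: "rchild T u v" "in_rsub T v w" "lchild T w p" "rchild T w q"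
    using uv v w p q \<open>w \<in> set_tree rr\<close> \<open>wl \<noteq> Leaf\<close> \<open>wr \<noteq> Leaf\<close>
    unfolding rchild_def in_rsub_def lchild_def by force+
  show ?thesis
    unfolding contains_def
  proof (intro exI[of _ f] conjI allI impI)
    show "inj_on f (set_tree P12435)"
      using distinct unfolding set_tree_P12435 f_def inj_on_def by auto
    show "f ` set_tree P12435 \<subseteq> set_tree T"
      using in_set_tree_if[OF uv] set_tree_subtrees[OF uv] \<open>w \<in> set_tree rr\<close> p q
        set_tree_subtrees[OF w_rr]
      by (auto simp: set_tree_P12435 f_def)
  next
    fix a i
    assume "lchild P12435 a i"
    then show "if e10xy x y i then lchild T (f a) (f i) else in_lsub T (f a) (f i)"
      using edges lchild_imp_in_lsub by (simp add: lchild_P12435_iff f_def)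
  next
    fix a i
    assume "rchild P12435 a i"
    then show "if e10xy x y i then rchild T (f a) (f i) else in_rsub T (f a) (f i)"
      using edges rchild_imp_in_rsub by (auto simp: rchild_P12435_iff e10xy_def f_def)
  qed
qed

lemma contains_P12435_iff:
  assumes T: "distinct (inorder T)"
  shows "contains T P12435 (e10xy x y) \<longleftrightarrow> \<not> right_paths T"
proof
  assume "contains T P12435 (e10xy x y)"
  then obtain f where
    l: "\<forall>v i. lchild P12435 v i \<longrightarrow>
      (if e10xy x y i then lchild T (f v) (f i) else in_lsub T (f v) (f i))" and
    r: "\<forall>v i. rchild P12435 v i \<longrightarrow>
      (if e10xy x y i then rchild T (f v) (f i) else in_rsub T (f v) (f i))"
    unfolding contains_def by blast
  have "rchild T (f 1) (f 2)" "in_rsub T (f 2) (f 4)"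
    "in_lsub T (f 4) (f 3)" "in_rsub T (f 4) (f 5)"
    using l[rule_format, of 4 3] r[rule_format, of 1 2] r[rule_format, of 2 4] r[rule_format, of 4 5]
      lchild_imp_in_lsub rchild_imp_in_rsub
    by (auto simp: lchild_P12435_iff rchild_P12435_iff e10xy_def split: if_splits)
  then have "\<exists>l rl rr. Node l (f 1) (Node rl (f 2) rr) \<in> subtrees T \<and> \<not> path_tree rr"
    by (rule not_path_tree_if_pattern_nodes[OF T])
  then show "\<not> right_paths T"
    unfolding right_paths_iff_subtrees by blast
next
  assume "\<not> right_paths T"
  then show "contains T P12435 (e10xy x y)"
    using contains_P12435_if_not_path_tree[OF T] unfolding right_paths_iff_subtrees by blast
qed

lemma avoiders_P12435:
  "avoiders n P12435 (e10xy x y) = {t. inorder t = [1..<n+1] \<and> right_paths t}"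
  using contains_P12435_iff by (auto simp: avoiders_def BT_def)

section \<open>Counting\<close>

lemma trees_with_inorder_split:
  assumes "length xs = Suc m"
  shows "{t. inorder t = xs \<and> S t} =
    (\<Union>k\<le>m. (\<lambda>(l, r). Node l (xs ! k) r) `
       {(l, r). inorder l = take k xs \<and> inorder r = drop (Suc k) xs \<and> S (Node l (xs ! k) r)})"
    (is "?lhs = (\<Union>k\<le>m. ?node k ` ?B k)")
proof (intro equalityI subsetI)
  fix t assume "t \<in> ?lhs"
  then obtain l v r where t: "t = Node l v r" "inorder l @ v # inorder r = xs" "S t"
    using assms by (cases t) auto
  define k where "k = size l"
  have "k \<le> m" "take k xs = inorder l" "drop (Suc k) xs = inorder r" "xs ! k = v"
    using t(2) assms by (auto simp: k_def nth_append simp flip: length_inorder)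
  then show "t \<in> (\<Union>k\<le>m. ?node k ` ?B k)"
    using t by (auto intro!: bexI[of _ k] image_eqI[of _ _ "(l, r)"])
next
  fix t assume "t \<in> (\<Union>k\<le>m. ?node k ` ?B k)"
  then obtain k l r where "k \<le> m" "t = Node l (xs ! k) r" "(l, r) \<in> ?B k" by auto
  then show "t \<in> ?lhs"
    using assms by (simp add: id_take_nth_drop[symmetric])
qed

lemma finite_trees_with_inorder: "finite {t. inorder t = xs}"
proof (induction "length xs" arbitrary: xs rule: less_induct)
  case less
  show ?case
  proof (cases "length xs")
    case 0
    then show ?thesis by simp
  next
    case (Suc m)
    have "finite {(l, r). inorder l = take k xs \<and> inorder r = drop (Suc k) xs \<and> True}"
      if "k \<le> m" for k
      by (rule finite_subset[of _ "{l. inorder l = take k xs} \<times> {r. inorder r = drop (Suc k) xs}"])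
        (use less that Suc in auto)
    then show ?thesis
      using trees_with_inorder_split[OF Suc, of "\<lambda>_. True"] by auto
  qed
qed

lemma card_trees_with_inorder_split:
  assumes len: "length xs = Suc m"
    and S: "\<And>l v r. size l + size r = m \<Longrightarrow> S (Node l v r) \<longleftrightarrow> SL l \<and> SR r \<and> C (size l)"
  shows "card {t. inorder t = xs \<and> S t} =
    (\<Sum>k\<le>m. if C k then card {l. inorder l = take k xs \<and> SL l} *
                        card {r. inorder r = drop (Suc k) xs \<and> SR r} else 0)"
proof -
  define B where "B k = {(l, r). inorder l = take k xs \<and> inorder r = drop (Suc k) xs \<and>
    S (Node l (xs ! k) r)}" for k
  define node where "node k = (\<lambda>(l, r). Node l (xs ! k) r)" for k
  have B: "B k = (if C k then {l. inorder l = take k xs \<and> SL l} \<times>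
      {r. inorder r = drop (Suc k) xs \<and> SR r} else {})" if "k \<le> m" for k
    using S[of _ _ "xs ! k"] that len by (auto simp: B_def simp flip: length_inorder)
  have "finite (B k)" for k
    by (rule finite_subset[of _ "{l. inorder l = take k xs} \<times> {r. inorder r = drop (Suc k) xs}"])
      (auto simp: B_def finite_trees_with_inorder)
  moreover have "node i ` B i \<inter> node j ` B j = {}" if "i \<le> m" "j \<le> m" "i \<noteq> j" for i j
  proof -
    have size: "size l = k" if "(l, r) \<in> B k" "k \<le> m" for l r k
      using that len by (auto simp: B_def simp flip: length_inorder)
    show ?thesis
      using size[of _ _ i] size[of _ _ j] that by (force simp: node_def)
  qed
  ultimately have "card (\<Union>k\<le>m. node k ` B k) = (\<Sum>k\<le>m. card (node k ` B k))"
    by (intro card_UN_disjoint) auto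
  also have "\<dots> = (\<Sum>k\<le>m. card (B k))"
    by (intro sum.cong refl card_image) (auto simp: node_def inj_on_def)
  also have "\<dots> = (\<Sum>k\<le>m. if C k then card {l. inorder l = take k xs \<and> SL l} *
                        card {r. inorder r = drop (Suc k) xs \<and> SR r} else 0)"
    by (rule sum.cong) (simp_all add: B card_cartesian_product)
  finally show ?thesis
    using trees_with_inorder_split[OF len, of S] by (simp only: B_def node_def)
qed

lemma card_path_tree: "card {t. inorder t = xs \<and> path_tree t} = 2 ^ (length xs - 1)"
proof (induction "length xs" arbitrary: xs rule: less_induct)
  case less
  show ?case
  proof (cases "length xs")
    case 0
    then have "{t. inorder t = xs \<and> path_tree t} = {Leaf}" by auto
    then show ?thesis using 0 by simp
  next
    case (Suc m)
    have "card {t. inorder t = xs \<and> path_tree t} =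
      (\<Sum>k\<le>m. if k = 0 \<or> k = m then 2 ^ (k - 1) * 2 ^ (m - k - 1) else 0)"
    proof (subst card_trees_with_inorder_split[OF Suc, where SL = path_tree and SR = path_tree])
      show "path_tree (Node l v r) \<longleftrightarrow> path_tree l \<and> path_tree r \<and> (size l = 0 \<or> size l = m)"
        if "size l + size r = m" for l r :: "'a tree" and v
        using that by auto
      show "(\<Sum>k\<le>m. if k = 0 \<or> k = m then card {l. inorder l = take k xs \<and> path_tree l} *
          card {r. inorder r = drop (Suc k) xs \<and> path_tree r} else 0) =
        (\<Sum>k\<le>m. if k = 0 \<or> k = m then 2 ^ (k - 1) * 2 ^ (m - k - 1) else 0)"
        using less Suc by (intro sum.cong) auto
    qed
    also have "\<dots> = 2 ^ m"
    proof (cases m)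
      case (Suc j)
      have "{..m} \<inter> {k. k = 0 \<or> k = m} = {0, m}" by auto
      then show ?thesis
        unfolding sum.If_cases using Suc by simp
    qed simp
    finally show ?thesis
      using Suc by simp
  qed
qed

(* 2 ^ (j - 1) is the number of paths on j nodes, also for j = 0 by truncated subtraction. *)
fun num_right_paths :: "nat \<Rightarrow> int" and num_right_paths_rchild :: "nat \<Rightarrow> int" where
  "num_right_paths 0 = 1"
| "num_right_paths (Suc m) = (\<Sum>k\<le>m. num_right_paths k * num_right_paths_rchild (m - k))"
| "num_right_paths_rchild 0 = 1"
| "num_right_paths_rchild (Suc m) = (\<Sum>k\<le>m. num_right_paths k * 2 ^ (m - k - 1))"

lemma card_right_paths:
  "int (card {t. inorder t = xs \<and> right_paths t}) = num_right_paths (length xs) \<and>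
   int (card {t. inorder t = xs \<and> right_paths_rchild t}) = num_right_paths_rchild (length xs)"
proof (induction "length xs" arbitrary: xs rule: less_induct)
  case less
  show ?case
  proof (cases "length xs")
    case 0
    then have "{t. inorder t = xs \<and> right_paths t} = {Leaf}"
      "{t. inorder t = xs \<and> right_paths_rchild t} = {Leaf}" by auto
    then show ?thesis using 0 by simp
  next
    case (Suc m)
    have IH: "int (card {l. inorder l = take k xs \<and> right_paths l}) = num_right_paths k"
      "int (card {r. inorder r = drop (Suc k) xs \<and> right_paths_rchild r}) =
         num_right_paths_rchild (m - k)" if "k \<le> m" for k
      using less[of "take k xs"] less[of "drop (Suc k) xs"] that Suc by auto
    have "int (card {t. inorder t = xs \<and> right_paths t}) = num_right_paths (Suc m)"
      by (subst card_trees_with_inorder_split[OF Suc, where SL = right_paths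
            and SR = right_paths_rchild and C = "\<lambda>_. True"]) (simp_all add: IH)
    moreover have "int (card {t. inorder t = xs \<and> right_paths_rchild t}) =
        num_right_paths_rchild (Suc m)"
      by (subst card_trees_with_inorder_split[OF Suc, where SL = right_paths
            and SR = path_tree and C = "\<lambda>_. True"]) (simp_all add: IH card_path_tree Suc)
    ultimately show ?thesis
      using Suc by simp
  qed
qed

section \<open>The generating function\<close>

lemma quadratic_relation_of_system:
  fixes A E P X :: "'a::comm_ring_1"
  assumes A: "A = 1 + X * A * E" and E: "E = 1 + X * A * P" and P: "(1 - 2 * X) * P = 1 - X"
  shows "(1 - X) * (A - (1 + X * A)\<^sup>2) = - X"
proof -
  have H: "A - 1 - X * A = X\<^sup>2 * A\<^sup>2 * P"
  proof -
    have "A - 1 - X * A = X * A * (E - 1)"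
      by (subst (1) A) (simp add: algebra_simps)
    also have "\<dots> = X\<^sup>2 * A\<^sup>2 * P"
      by (subst E) (simp add: algebra_simps power2_eq_square)
    finally show ?thesis .
  qed
  have "(1 - X) * (A - (1 + X * A)\<^sup>2) = (1 - X) * (A - 1 - X * A) - (1 - X) * (X * A + X\<^sup>2 * A\<^sup>2)"
    by (simp add: algebra_simps power2_eq_square)
  also have "\<dots> = (1 - X) * (X\<^sup>2 * A\<^sup>2 * P) - (1 - X) * (X * A + X\<^sup>2 * A\<^sup>2)"
    by (simp only: H)
  also have "\<dots> =
      X\<^sup>2 * A\<^sup>2 * ((1 - 2 * X) * P) + X * (X\<^sup>2 * A\<^sup>2 * P) - (1 - X) * (X * A + X\<^sup>2 * A\<^sup>2)"
    by (simp add: algebra_simps)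
  also have "\<dots> = X\<^sup>2 * A\<^sup>2 * (1 - X) + X * (A - 1 - X * A) - (1 - X) * (X * A + X\<^sup>2 * A\<^sup>2)"
    by (simp only: P H)
  also have "\<dots> = - X"
    by (simp add: algebra_simps power2_eq_square)
  finally show ?thesis .
qed

lemma fps_num_right_paths:
  defines "F \<equiv> Abs_fps num_right_paths"
  shows "(1 - fps_X) * (F - (1 + fps_X * F)\<^sup>2) = - fps_X"
proof (rule quadratic_relation_of_system)
  define E where "E = Abs_fps num_right_paths_rchild"
  define P :: "int fps" where "P = Abs_fps (\<lambda>n. 2 ^ (n - 1))"
  show "F = 1 + fps_X * F * E"
  proof (rule fps_ext)
    fix n
    show "fps_nth F n = fps_nth (1 + fps_X * F * E) n"
      unfolding mult.assoc fps_add_nth fps_X_mult_nth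
      by (cases n) (simp_all add: F_def E_def fps_mult_nth atLeast0AtMost)
  qed
  show "E = 1 + fps_X * F * P"
  proof (rule fps_ext)
    fix n
    show "fps_nth E n = fps_nth (1 + fps_X * F * P) n"
      unfolding mult.assoc fps_add_nth fps_X_mult_nth
      by (cases n) (simp_all add: F_def E_def P_def fps_mult_nth atLeast0AtMost)
  qed
  have "(1 - 2 * fps_X) * P = P - fps_X * P - fps_X * P"
    by (simp add: algebra_simps mult_2)
  also have "\<dots> = 1 - fps_X"
  proof (rule fps_ext)
    fix n
    show "fps_nth (P - fps_X * P - fps_X * P) n = fps_nth (1 - fps_X) n"
      unfolding fps_sub_nth fps_X_mult_nth
      by (cases n; cases "n - 1") (simp_all add: P_def)
  qed
  finally show "(1 - 2 * fps_X) * P = 1 - fps_X" .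
qed

lemma fps_nth_Suc_eq_minus_one:
  fixes G :: "'a::comm_ring_1 fps"
  assumes "(1 - fps_X) * G = - fps_X"
  shows "fps_nth G (Suc m) = -1"
proof -
  have "G - (fps_X * G - fps_X) = (1 - fps_X) * G + fps_X"
    by (simp add: algebra_simps)
  also have "\<dots> = 0"
    using assms by simp
  finally have G: "G = fps_X * G - fps_X"
    by (rule right_minus_eq[THEN iffD1])
  have G0: "fps_nth G 0 = 0"
    by (subst G) simp
  have GSuc: "fps_nth G (Suc n) = fps_nth G n - fps_nth fps_X (Suc n)" for n
    by (subst G) simp
  show ?thesis
    by (induction m) (simp_all add: GSuc G0)
qed

definition shifted_num_right_paths :: "nat \<Rightarrow> int" where
  "shifted_num_right_paths n = (case n of 0 \<Rightarrow> 1 | Suc m \<Rightarrow> num_right_paths m)"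

lemma shifted_num_right_paths_rec:
  assumes "m \<ge> 1"
  shows "shifted_num_right_paths (m + 1) =
    -1 + (\<Sum>p=0..m. shifted_num_right_paths p * shifted_num_right_paths (m - p))"
proof -
  define B where "B = Abs_fps shifted_num_right_paths"
  have "B = 1 + fps_X * Abs_fps num_right_paths"
    by (rule fps_ext) (simp add: B_def shifted_num_right_paths_def split: nat.split)
  then have "(1 - fps_X) * (Abs_fps num_right_paths - B\<^sup>2) = - fps_X"
    using fps_num_right_paths by (simp only:)
  then have "fps_nth (Abs_fps num_right_paths - B\<^sup>2) (Suc (m - 1)) = -1"
    by (rule fps_nth_Suc_eq_minus_one)
  then have "num_right_paths m -
      (\<Sum>p=0..m. shifted_num_right_paths p * shifted_num_right_paths (m - p)) = -1"
    using assms by (simp add: B_def power2_eq_square fps_mult_nth)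
  moreover have "shifted_num_right_paths (m + 1) = num_right_paths m"
    by (simp add: shifted_num_right_paths_def)
  ultimately show ?thesis
    by linarith
qed

lemma A176677_recurrence_unique:
  fixes a b :: "nat \<Rightarrow> 'a::comm_ring_1"
  assumes "a 0 = b 0" and "a 1 = b 1"
    and a: "\<And>m. m \<ge> 1 \<Longrightarrow> a (m + 1) = -1 + (\<Sum>p=0..m. a p * a (m - p))"
    and b: "\<And>m. m \<ge> 1 \<Longrightarrow> b (m + 1) = -1 + (\<Sum>p=0..m. b p * b (m - p))"
  shows "a n = b n"
proof (induction n rule: less_induct)
  case (less n)
  show ?case
  proof (cases "n \<le> 1")
    case True
    then show ?thesis
      using assms(1,2) by (cases n) auto
  next
    case False
    define m where "m = n - 1"
    have m: "m \<ge> 1" "n = m + 1"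
      using False by (simp_all add: m_def)
    have "a (m + 1) = -1 + (\<Sum>p=0..m. a p * a (m - p))"
      by (rule a[OF m(1)])
    also have "\<dots> = -1 + (\<Sum>p=0..m. b p * b (m - p))"
      using less m(2) by (intro arg_cong[of _ _ "\<lambda>s. -1 + s"] sum.cong) auto
    also have "\<dots> = b (m + 1)"
      by (rule b[OF m(1), symmetric])
    finally show ?thesis
      using m(2) by simp
  qed
qed

theorem lemma23:
  fixes a :: "nat \<Rightarrow> int" and x y :: bool and n :: nat
  assumes "a 0 = 1" and "a 1 = 1"
    and "\<And>m. m \<ge> 1 \<Longrightarrow> a (m + 1) = -1 + (\<Sum>p=0..m. a p * a (m - p))"
  shows "int (card (avoiders n P12435 (e10xy x y))) = a (n + 1)"
proof -
  have "int (card (avoiders n P12435 (e10xy x y))) = num_right_paths (length [1..<n+1])"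
    unfolding avoiders_P12435 by (rule conjunct1[OF card_right_paths])
  also have "\<dots> = shifted_num_right_paths (n + 1)"
    by (simp add: shifted_num_right_paths_def del: upt_Suc)
  also have "\<dots> = a (n + 1)"
    by (rule A176677_recurrence_unique[OF _ _ shifted_num_right_paths_rec assms(3)])
      (use assms(1,2) in \<open>simp_all add: shifted_num_right_paths_def\<close>)
  finally show ?thesis .
qed

end
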